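(* Let $H_1$ and $H_2$ be vertex-disjoint connected graphs, each with at least two vertices, let $w\in V(H_1)$ and $v\in V(H_2)$, and let $k=\varepsilon_{H_1}(w)$. Let $l\geqslant 1$ be an integer with $k\geqslant l+1$. Let $G$ be the graph obtained from $H_1\cup H_2$ by adding the edge $wv$ and a path $vu_1u_2\ldots u_l$, where $u_1,\ldots,u_l$ are new vertices (so $wv$ is a cut edge of $G$ and $vu_1\ldots u_l$ is a pendant path at $v$). Let $$G'=G-\{vx: x\in N_{H_2}(v)\}+\{wx: x\in N_{H_2}(v)\}.$$ Then $\xi^{ee}(G)<\xi^{ee}(G')$.
   Context: All graphs are finite, simple and connected. For a vertex $x$ of a connected graph $G$, $\varepsilon_G(x)$ is the eccentricity of $x$ (the largest distance from $x$ to a vertex of $G$) and $d_G(x)$ its degree; $N_H(v)$ is the set of neighbours of $v$ in $H$. The total reciprocal edge-eccentricity of $G$ is $\xi^{ee}(G)=\sum_{uv\in E(G)}\left(\frac{1}{\varepsilon_G(u)}+\frac{1}{\varepsilon_G(v)}\right)=\sum_{x\in V(G)}\frac{d_G(x)}{\varepsilon_G(x)}$. *)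

theory Defs
  imports Complex_Main
begin

definition simple_graph :: "'a set \<Rightarrow> 'a set set \<Rightarrow> bool" where
  "simple_graph V E \<longleftrightarrow> finite V \<and>
     (\<forall>e\<in>E. \<exists>x y. x \<in> V \<and> y \<in> V \<and> x \<noteq> y \<and> e = {x, y})"

definition walk :: "'a set \<Rightarrow> 'a set set \<Rightarrow> 'a list \<Rightarrow> bool" where
  "walk V E xs \<longleftrightarrow> xs \<noteq> [] \<and> set xs \<subseteq> V \<and>
     (\<forall>i. Suc i < length xs \<longrightarrow> {xs ! i, xs ! Suc i} \<in> E)"

definition connected_graph :: "'a set \<Rightarrow> 'a set set \<Rightarrow> bool" where
  "connected_graph V E \<longleftrightarrow> V \<noteq> {} \<and>
     (\<forall>x\<in>V. \<forall>y\<in>V. \<exists>xs. walk V E xs \<and> hd xs = x \<and> last xs = y)"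

definition dist :: "'a set \<Rightarrow> 'a set set \<Rightarrow> 'a \<Rightarrow> 'a \<Rightarrow> nat" where
  "dist V E x y = (LEAST n. \<exists>xs. walk V E xs \<and> hd xs = x \<and> last xs = y \<and> length xs = Suc n)"

definition ecc :: "'a set \<Rightarrow> 'a set set \<Rightarrow> 'a \<Rightarrow> nat" where
  "ecc V E x = Max (dist V E x ` V)"

definition nbrs :: "'a set set \<Rightarrow> 'a \<Rightarrow> 'a set" where
  "nbrs E x = {y. {x, y} \<in> E}"

definition degree :: "'a set set \<Rightarrow> 'a \<Rightarrow> nat" where
  "degree E x = card (nbrs E x)"

definition xi_ee :: "'a set \<Rightarrow> 'a set set \<Rightarrow> real" where
  "xi_ee V E = (\<Sum>x\<in>V. real (degree E x) / real (ecc V E x))"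

end

theory Submission
  imports Defs
begin

text \<open>Moving the \<open>H2\<close>-neighbours \<open>N\<close> of \<open>v\<close> over to \<open>w\<close> raises the degree of \<open>w\<close>
  by \<open>|N|\<close>, lowers that of \<open>v\<close> by \<open>|N|\<close>, keeps all other degrees, and lets no
  eccentricity grow except at \<open>v\<close> and on the pendant path. Let \<open>k = \<epsilon>\<^sub>H\<^sub>1(w)\<close> and
  \<open>m = \<epsilon>\<^sub>H\<^sub>2(v)\<close>. If \<open>m \<le> k\<close>, then \<open>w\<close> has eccentricity \<open>k\<close> and \<open>v\<close> has
  eccentricity \<open>k + 1\<close> in both graphs, so the net change at \<open>w\<close> and \<open>v\<close> is
  \<open>|N|/k - |N|/(k + 1) > 0\<close>. If \<open>k < m\<close>, the eccentricity of \<open>u\<^sub>j\<close> may grow from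
  \<open>j + m\<close> to \<open>j + m + 1\<close>; this loss is paid for by the vertex at distance \<open>j\<close> from \<open>w\<close>
  on a shortest path to a farthest vertex of \<open>H1\<close>, whose degree is at least 2 and whose
  eccentricity drops from \<open>j + m + 1\<close> to \<open>j + m\<close>. The changes at \<open>w\<close> and \<open>v\<close> then
  cancel up to a nonnegative term, and the end of that shortest path gains strictly.

  Lower bounds for distances in \<open>G\<close> come from potentials that change by at most one
  along every edge; upper bounds in \<open>G'\<close> from explicit walks.\<close>

section \<open>Walks, distances and eccentricities\<close>

lemma walk_iff_successively:
  "walk V E xs \<longleftrightarrow> xs \<noteq> [] \<and> set xs \<subseteq> V \<and> successively (\<lambda>a b. {a, b} \<in> E) xs"
  unfolding walk_def successively_conv_nth by auto

definition reach_within :: "'a set \<Rightarrow> 'a set set \<Rightarrow> 'a \<Rightarrow> 'a \<Rightarrow> nat \<Rightarrow> bool" where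
  "reach_within V E x y n \<longleftrightarrow> (\<exists>xs. walk V E xs \<and> hd xs = x \<and> last xs = y \<and> length xs \<le> Suc n)"

definition reachable :: "'a set \<Rightarrow> 'a set set \<Rightarrow> 'a \<Rightarrow> 'a \<Rightarrow> bool" where
  "reachable V E x y \<longleftrightarrow> (\<exists>n. reach_within V E x y n)"

lemma dist_le_if_reach_within:
  assumes "reach_within V E x y n"
  shows "dist V E x y \<le> n"
proof -
  obtain xs where xs: "walk V E xs" "hd xs = x" "last xs = y" "length xs \<le> Suc n"
    using assms unfolding reach_within_def by blast
  then have "xs \<noteq> []" unfolding walk_def by auto
  then have "dist V E x y \<le> length xs - 1"
    unfolding dist_def using xs by (intro Least_le exI[of _ xs]) auto
  then show ?thesis using xs(4) by simp
qed

lemma reach_within_dist: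
  assumes "reachable V E x y"
  shows "reach_within V E x y (dist V E x y)"
proof -
  obtain xs where xs: "walk V E xs" "hd xs = x" "last xs = y"
    using assms unfolding reachable_def reach_within_def by blast
  then have "xs \<noteq> []" unfolding walk_def by auto
  then have "\<exists>n ys. walk V E ys \<and> hd ys = x \<and> last ys = y \<and> length ys = Suc n"
    using xs by (intro exI[of _ "length xs - 1"] exI[of _ xs]) auto
  then have "\<exists>ys. walk V E ys \<and> hd ys = x \<and> last ys = y \<and> length ys = Suc (dist V E x y)"
    unfolding dist_def by (rule LeastI_ex)
  then show ?thesis unfolding reach_within_def by auto
qed

lemma reachable_if_reach_within: "reach_within V E x y n \<Longrightarrow> reachable V E x y"
  unfolding reachable_def by blast

lemma reachable_if_connected:
  assumes "connected_graph V E" "x \<in> V" "y \<in> V"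
  shows "reachable V E x y"
proof -
  obtain xs where "walk V E xs" "hd xs = x" "last xs = y"
    using assms unfolding connected_graph_def by blast
  then have "reach_within V E x y (length xs)" unfolding reach_within_def by auto
  then show ?thesis by (rule reachable_if_reach_within)
qed

lemma connected_graph_if_reachable:
  assumes "V \<noteq> {}" "\<And>x y. x \<in> V \<Longrightarrow> y \<in> V \<Longrightarrow> reachable V E x y"
  shows "connected_graph V E"
  unfolding connected_graph_def using assms unfolding reachable_def reach_within_def by blast

lemma reach_within_refl: "x \<in> V \<Longrightarrow> reach_within V E x x 0"
  unfolding reach_within_def by (intro exI[of _ "[x]"]) (auto simp: walk_iff_successively)

lemma reach_within_edge: "{x, y} \<in> E \<Longrightarrow> x \<in> V \<Longrightarrow> y \<in> V \<Longrightarrow> reach_within V E x y 1"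
  unfolding reach_within_def by (intro exI[of _ "[x, y]"]) (auto simp: walk_iff_successively)

lemma reach_within_mono: "reach_within V E x y a \<Longrightarrow> a \<le> b \<Longrightarrow> reach_within V E x y b"
  unfolding reach_within_def by (metis Suc_le_mono le_trans)

lemma reach_within_sym:
  assumes "reach_within V E x y n"
  shows "reach_within V E y x n"
proof -
  obtain xs where xs: "walk V E xs" "hd xs = x" "last xs = y" "length xs \<le> Suc n"
    using assms unfolding reach_within_def by blast
  have "walk V E (rev xs)"
    using xs(1) unfolding walk_iff_successively by (auto simp: insert_commute)
  then show ?thesis
    unfolding reach_within_def using xs
    by (intro exI[of _ "rev xs"]) (auto simp: hd_rev last_rev walk_iff_successively)
qed

lemma reach_within_trans:
  assumes "reach_within V E x y a" "reach_within V E y z b"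
  shows "reach_within V E x z (a + b)"
proof -
  obtain xs where xs: "walk V E xs" "hd xs = x" "last xs = y" "length xs \<le> Suc a"
    using assms(1) unfolding reach_within_def by blast
  obtain ys where ys: "walk V E ys" "hd ys = y" "last ys = z" "length ys \<le> Suc b"
    using assms(2) unfolding reach_within_def by blast
  obtain ys' where ys': "ys = y # ys'"
    using ys(1,2) unfolding walk_def by (cases ys) auto
  have "xs \<noteq> []" using xs(1) unfolding walk_def by simp
  have "successively (\<lambda>a b. {a, b} \<in> E) (xs @ ys')"
  proof (cases ys')
    case Nil
    then show ?thesis using xs(1) by (simp add: walk_iff_successively)
  next
    case (Cons c cs)
    then have "{y, c} \<in> E" "successively (\<lambda>a b. {a, b} \<in> E) ys'"
      using ys(1) ys' by (auto simp: walk_iff_successively)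
    then show ?thesis
      using xs(1,3) \<open>xs \<noteq> []\<close> Cons by (auto simp: walk_iff_successively successively_append_iff)
  qed
  then have "walk V E (xs @ ys')"
    using xs(1) ys(1) ys' \<open>xs \<noteq> []\<close> by (auto simp: walk_iff_successively)
  then show ?thesis
    unfolding reach_within_def using xs ys ys' \<open>xs \<noteq> []\<close>
    by (intro exI[of _ "xs @ ys'"]) (auto simp: last_append)
qed

lemma reach_within_map:
  assumes "reach_within V E x y n"
    and "\<And>a b. {a, b} \<in> E \<Longrightarrow> a \<in> V \<Longrightarrow> b \<in> V \<Longrightarrow> {f a, f b} \<in> E'"
    and "\<And>a. a \<in> V \<Longrightarrow> f a \<in> V'"
  shows "reach_within V' E' (f x) (f y) n"
proof -
  obtain xs where xs: "walk V E xs" "hd xs = x" "last xs = y" "length xs \<le> Suc n"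
    using assms(1) unfolding reach_within_def by blast
  then have xs': "xs \<noteq> []" "set xs \<subseteq> V" "successively (\<lambda>a b. {a, b} \<in> E) xs"
    by (auto simp: walk_iff_successively)
  from xs'(2,3) have "successively (\<lambda>a b. {f a, f b} \<in> E') xs"
    by (induction xs rule: induct_list012) (auto intro: assms(2))
  then have "walk V' E' (map f xs)"
    using xs' assms(3) by (auto simp: walk_iff_successively successively_map)
  then show ?thesis
    unfolding reach_within_def using xs xs'(1)
    by (intro exI[of _ "map f xs"]) (auto simp: hd_map last_map)
qed

lemma reach_within_subgraph:
  "reach_within V E x y n \<Longrightarrow> V \<subseteq> V' \<Longrightarrow> E \<subseteq> E' \<Longrightarrow> reach_within V' E' x y n"
  using reach_within_map[of V E x y n id E' V'] by auto

lemma reachable_sym: "reachable V E x y \<Longrightarrow> reachable V E y x"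
  unfolding reachable_def using reach_within_sym by metis

lemma reachable_trans: "reachable V E x y \<Longrightarrow> reachable V E y z \<Longrightarrow> reachable V E x z"
  unfolding reachable_def using reach_within_trans by metis

lemma dist_self: "x \<in> V \<Longrightarrow> dist V E x x = 0"
  using dist_le_if_reach_within[OF reach_within_refl] by simp

lemma dist_sym: "reachable V E x y \<Longrightarrow> dist V E x y = dist V E y x"
  by (meson antisym dist_le_if_reach_within reach_within_dist reach_within_sym reachable_sym)

lemma dist_edge_le:
  "reachable V E x a \<Longrightarrow> {a, b} \<in> E \<Longrightarrow> a \<in> V \<Longrightarrow> b \<in> V \<Longrightarrow> dist V E x b \<le> dist V E x a + 1"
  by (rule dist_le_if_reach_within, rule reach_within_trans[OF reach_within_dist reach_within_edge])

lemma dist_pos: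
  assumes "reachable V E x y" "x \<noteq> y"
  shows "0 < dist V E x y"
proof (rule ccontr)
  assume "\<not> ?thesis"
  then have "reach_within V E x y 0" using reach_within_dist[OF assms(1)] by simp
  then obtain xs where "walk V E xs" "hd xs = x" "last xs = y" "length xs \<le> 1"
    unfolding reach_within_def by auto
  then show False using assms(2) by (cases xs) (auto simp: walk_iff_successively)
qed

lemma walk_potential_bound:
  fixes \<phi> :: "'a \<Rightarrow> int"
  assumes "walk V E xs" "\<And>a b. {a, b} \<in> E \<Longrightarrow> \<phi> b \<le> \<phi> a + 1"
  shows "\<phi> (last xs) \<le> \<phi> (hd xs) + int (length xs - 1)"
proof -
  have "successively (\<lambda>a b. {a, b} \<in> E) xs" "xs \<noteq> []"
    using assms(1) by (auto simp: walk_iff_successively)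
  then show ?thesis
  proof (induction xs rule: induct_list012)
    case (3 a b zs)
    then show ?case using assms(2)[of a b] by auto
  qed auto
qed

lemma dist_ge_potential:
  fixes \<phi> :: "'a \<Rightarrow> int"
  assumes "reachable V E x y" "\<And>a b. {a, b} \<in> E \<Longrightarrow> \<phi> b \<le> \<phi> a + 1"
  shows "\<phi> y - \<phi> x \<le> int (dist V E x y)"
proof -
  obtain xs where "walk V E xs" "hd xs = x" "last xs = y" "length xs \<le> Suc (dist V E x y)"
    using reach_within_dist[OF assms(1)] unfolding reach_within_def by blast
  then show ?thesis using walk_potential_bound[of V E xs \<phi>] assms(2) by force
qed

lemma dist_le_ecc: "finite V \<Longrightarrow> z \<in> V \<Longrightarrow> dist V E x z \<le> ecc V E x"
  unfolding ecc_def by auto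

lemma ecc_le_if_reach_within:
  assumes "finite V" "V \<noteq> {}" "\<And>z. z \<in> V \<Longrightarrow> reach_within V E x z n"
  shows "ecc V E x \<le> n"
proof -
  have "\<forall>z\<in>V. dist V E x z \<le> n" using assms(3) by (blast intro: dist_le_if_reach_within)
  then show ?thesis unfolding ecc_def using assms(1,2) by simp
qed

lemma ecc_attained:
  assumes "finite V" "V \<noteq> {}"
  obtains z where "z \<in> V" "dist V E x z = ecc V E x"
proof -
  have "Max (dist V E x ` V) \<in> dist V E x ` V" using assms by (intro Max_in) auto
  then show ?thesis using that unfolding ecc_def by auto
qed

lemma ecc_pos:
  "finite V \<Longrightarrow> z \<in> V \<Longrightarrow> reachable V E x z \<Longrightarrow> x \<noteq> z \<Longrightarrow> 0 < ecc V E x"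
  using dist_le_ecc[of V z E x] dist_pos[of V E x z] by simp

lemma reach_within_take:
  assumes "walk V E xs" "j < length xs"
  shows "reach_within V E (hd xs) (xs ! j) j"
proof -
  have "last (take (Suc j) xs) = xs ! j"
    using assms(2) by (subst last_conv_nth) (auto simp: min_def intro!: arg_cong[where f = "(!) xs"])
  then show ?thesis
    unfolding reach_within_def using assms
    by (intro exI[of _ "take (Suc j) xs"]) (auto simp: walk_def dest: in_set_takeD)
qed

lemma reach_within_drop:
  assumes "walk V E xs" "j < length xs"
  shows "reach_within V E (xs ! j) (last xs) (length xs - 1 - j)"
  unfolding reach_within_def using assms
  by (intro exI[of _ "drop j xs"]) (auto simp: walk_def hd_drop_conv_nth dest: in_set_dropD)

lemma geodesic_exists:
  assumes "reachable V E x z"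
  obtains ys where "length ys = Suc (dist V E x z)"
    and "\<And>j. j \<le> dist V E x z \<Longrightarrow> ys ! j \<in> V \<and> dist V E x (ys ! j) = j"
    and "\<And>j. j < dist V E x z \<Longrightarrow> {ys ! j, ys ! Suc j} \<in> E"
proof -
  define d where "d = dist V E x z"
  obtain ys where ys: "walk V E ys" "hd ys = x" "last ys = z" "length ys \<le> Suc d"
    using reach_within_dist[OF assms] unfolding reach_within_def d_def by blast
  have "d \<le> length ys - 1"
    unfolding d_def using ys by (intro dist_le_if_reach_within) (auto simp: reach_within_def)
  moreover have "ys \<noteq> []" using ys(1) unfolding walk_def by simp
  ultimately have len: "length ys = Suc d" using ys(4) by (cases ys) auto
  have mem: "ys ! j \<in> V" if "j \<le> d" for j
    using ys(1) len that unfolding walk_def by (auto simp: nth_mem subset_iff)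
  have "dist V E x (ys ! j) = j" if j: "j \<le> d" for j
  proof (rule antisym)
    show "dist V E x (ys ! j) \<le> j"
      using dist_le_if_reach_within[OF reach_within_take[OF ys(1)]] ys(2) len j by simp
    have "reach_within V E (ys ! j) z (d - j)"
      using reach_within_drop[OF ys(1), of j] ys(3) len j by simp
    then have "reach_within V E x z (dist V E x (ys ! j) + (d - j))"
      using reach_within_trans[OF reach_within_dist] reachable_if_reach_within
        reach_within_take[OF ys(1), of j] ys(2) len j by (metis less_Suc_eq_le)
    then have "d \<le> dist V E x (ys ! j) + (d - j)"
      unfolding d_def by (rule dist_le_if_reach_within)
    then show "j \<le> dist V E x (ys ! j)" using j by linarith
  qed
  moreover have "{ys ! j, ys ! Suc j} \<in> E" if "j < d" for j
    using ys(1) len that unfolding walk_def by auto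
  ultimately show ?thesis using that len mem unfolding d_def by blast
qed

text \<open>The distance from \<open>x\<close> in the subgraph, continued by a constant outside it,
  changes by at most one along every edge of the whole graph.\<close>

lemma dist_attached_subgraph_le:
  assumes "connected_graph V' E'" "x \<in> V'" "z \<in> V'" "c \<in> V'" "reachable V E x z"
    and induced: "\<And>a b. {a, b} \<in> E \<Longrightarrow> a \<in> V' \<Longrightarrow> b \<in> V' \<Longrightarrow> {a, b} \<in> E'"
    and attached: "\<And>a b. {a, b} \<in> E \<Longrightarrow> a \<in> V' \<Longrightarrow> b \<notin> V' \<Longrightarrow> a = c"
  shows "dist V' E' x z \<le> dist V E x z"
proof -
  define \<phi> where
    "\<phi> t = (if t \<in> V' then int (dist V' E' x t) else int (dist V' E' x c) + 1)" for t
  have "\<phi> b \<le> \<phi> a + 1" if e: "{a, b} \<in> E" for a b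
  proof (cases "a \<in> V'"; cases "b \<in> V'")
    assume "a \<in> V'" "b \<in> V'"
    then show ?thesis
      using dist_edge_le[OF reachable_if_connected[OF assms(1,2)] induced[OF e]] \<phi>_def by simp
  next
    assume "a \<notin> V'" "b \<in> V'"
    then have "b = c" using attached[of b a] e by (simp add: insert_commute)
    then show ?thesis using \<open>a \<notin> V'\<close> \<open>b \<in> V'\<close> \<phi>_def by simp
  qed (auto simp: \<phi>_def attached[OF e])
  then have "\<phi> z - \<phi> x \<le> int (dist V E x z)" by (rule dist_ge_potential[OF assms(5)])
  then show ?thesis using assms(2,3) dist_self[of x V' E'] \<phi>_def by simp
qed

lemma ecc_attached_subgraph_le:
  assumes "finite V" "connected_graph V E" "V' \<subseteq> V"
    and "connected_graph V' E'" "x \<in> V'" "c \<in> V'"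
    and "\<And>a b. {a, b} \<in> E \<Longrightarrow> a \<in> V' \<Longrightarrow> b \<in> V' \<Longrightarrow> {a, b} \<in> E'"
    and "\<And>a b. {a, b} \<in> E \<Longrightarrow> a \<in> V' \<Longrightarrow> b \<notin> V' \<Longrightarrow> a = c"
  shows "ecc V' E' x \<le> ecc V E x"
proof -
  obtain z where z: "z \<in> V'" "dist V' E' x z = ecc V' E' x"
    using ecc_attained[of V' E' x] finite_subset[OF assms(3,1)] assms(5) by blast
  have "dist V' E' x z \<le> dist V E x z"
    using assms z(1) reachable_if_connected[OF assms(2)] subsetD[OF assms(3)]
    by (intro dist_attached_subgraph_le[where c = c]) auto
  also have "\<dots> \<le> ecc V E x" using assms(1,3) z(1) by (intro dist_le_ecc) auto
  finally show ?thesis using z(2) by simp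
qed

lemma simple_graph_edge: "simple_graph V E \<Longrightarrow> {a, b} \<in> E \<Longrightarrow> a \<in> V \<and> b \<in> V \<and> a \<noteq> b"
  unfolding simple_graph_def by (auto simp: doubleton_eq_iff)

lemma connected_graph_ex_neighbour:
  assumes "simple_graph V E" "connected_graph V E" "card V \<ge> 2" "x \<in> V"
  obtains y where "{x, y} \<in> E" "y \<in> V" "y \<noteq> x"
proof -
  have "\<not> V \<subseteq> {x}" using assms(3) card_mono[of "{x}" V] by auto
  then obtain z where z: "z \<in> V" "z \<noteq> x" by blast
  obtain xs where xs: "walk V E xs" "hd xs = x" "last xs = z"
    using assms(2,4) z unfolding connected_graph_def by blast
  then obtain y ys where "xs = x # y # ys"
    using z(2) unfolding walk_def by (metis hd_Cons_tl last_ConsL list.collapse)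
  then have "{x, y} \<in> E" using xs(1) unfolding walk_iff_successively by simp
  then show ?thesis using that simple_graph_edge[OF assms(1)] by blast
qed

lemma degree_pos: "finite (nbrs E x) \<Longrightarrow> {x, a} \<in> E \<Longrightarrow> 0 < degree E x"
  unfolding degree_def nbrs_def using card_gt_0_iff by blast

lemma two_le_degree:
  assumes "finite (nbrs E x)" "{x, a} \<in> E" "{x, b} \<in> E" "a \<noteq> b"
  shows "2 \<le> degree E x"
proof -
  have "card {a, b} \<le> degree E x"
    unfolding degree_def using assms(1-3) by (intro card_mono) (auto simp: nbrs_def)
  then show ?thesis using assms(4) by simp
qed

lemma frac_diff_le:
  fixes d d' e e' p p' q q' :: real
  assumes "0 < e'" "e' \<le> p'" "0 < p" "p \<le> e" "0 \<le> q'" "q' \<le> d'" "0 \<le> d" "d \<le> q"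
  shows "q' / p' - q / p \<le> d' / e' - d / e"
proof -
  have "q' / p' \<le> q' / e'" using assms(1,2,5) by (intro divide_left_mono) auto
  also have "\<dots> \<le> d' / e'" using assms(1,6) by (simp add: divide_right_mono)
  finally have "q' / p' \<le> d' / e'" .
  moreover have "d / e \<le> d / p" using assms(3,4,7) by (intro divide_left_mono) auto
  moreover have "\<dots> \<le> q / p" using assms(3,8) by (simp add: divide_right_mono)
  ultimately show ?thesis by linarith
qed

lemma frac_diff_succ_mono:
  fixes a c d :: real
  assumes "c \<le> d" "0 < a"
  shows "c / a - c / (a + 1) \<le> d / a - d / (a + 1)"
proof -
  have "c / a - c / (a + 1) = c / (a * (a + 1))" "d / a - d / (a + 1) = d / (a * (a + 1))"
    using assms(2) by (simp_all add: field_simps)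
  then show ?thesis using assms by (simp add: divide_right_mono)
qed

section \<open>The graphs \<open>G\<close> and \<open>G'\<close>\<close>

locale cut_edge_pendant_path =
  fixes V1 V2 :: "'a set" and E1 E2 :: "'a set set" and w v :: 'a
    and u :: "nat \<Rightarrow> 'a" and l k :: nat
  assumes H1_simple: "simple_graph V1 E1" and H1_connected: "connected_graph V1 E1"
    and H1_card: "card V1 \<ge> 2"
    and H2_simple: "simple_graph V2 E2" and H2_connected: "connected_graph V2 E2"
    and H2_card: "card V2 \<ge> 2"
    and disjoint: "V1 \<inter> V2 = {}"
    and w_in_V1: "w \<in> V1" and v_in_V2: "v \<in> V2"
    and k_def: "k = ecc V1 E1 w"
    and l_pos: "l \<ge> 1" and l_less_k: "k \<ge> l + 1"
    and u_inj: "inj_on u {1..l}" and u_fresh: "u ` {1..l} \<inter> (V1 \<union> V2) = {}"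
begin

definition "GV = V1 \<union> V2 \<union> u ` {1..l}"
definition "GE = E1 \<union> E2 \<union> {{w, v}, {v, u 1}} \<union> {{u i, u (Suc i)} | i. 1 \<le> i \<and> i < l}"
definition "N = nbrs E2 v"
definition "GE' = (GE - {{v, x} | x. x \<in> N}) \<union> {{w, x} | x. x \<in> N}"

definition "D1 x = dist V1 E1 w x"
definition "D2 x = dist V2 E2 v x"
definition "m = ecc V2 E2 v"

lemma finite_V1: "finite V1" and finite_V2: "finite V2"
  using H1_simple H2_simple unfolding simple_graph_def by auto

lemma finite_GV: "finite GV"
  unfolding GV_def using finite_V1 finite_V2 by auto

lemma GV_nonempty: "GV \<noteq> {}"
  unfolding GV_def using w_in_V1 by auto

lemma V1_sub_GV: "V1 \<subseteq> GV" and V2_sub_GV: "V2 \<subseteq> GV"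
  unfolding GV_def by auto

lemma w_in_GV: "w \<in> GV" and v_in_GV: "v \<in> GV"
  using w_in_V1 v_in_V2 V1_sub_GV V2_sub_GV by auto

lemma w_v_distinct: "w \<noteq> v" "w \<notin> V2" "v \<notin> V1"
  using disjoint w_in_V1 v_in_V2 by auto

lemma u_mem:
  assumes "1 \<le> i" "i \<le> l"
  shows "u i \<notin> V1" "u i \<notin> V2" "u i \<in> GV"
proof -
  have "u i \<in> u ` {1..l}" using assms by auto
  then show "u i \<notin> V1" "u i \<notin> V2" "u i \<in> GV" using u_fresh unfolding GV_def by blast+
qed

lemma u_eq_iff: "i \<in> {1..l} \<Longrightarrow> j \<in> {1..l} \<Longrightarrow> u i = u j \<longleftrightarrow> i = j"
  using inj_on_eq_iff[OF u_inj] by auto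

lemma GV_cases:
  assumes "x \<in> GV"
  obtains "x \<in> V1" | "x \<in> V2" | i where "1 \<le> i" "i \<le> l" "x = u i"
  using assms unfolding GV_def by auto

lemma E1_edge: "{a, b} \<in> E1 \<Longrightarrow> a \<in> V1 \<and> b \<in> V1 \<and> a \<noteq> b"
  using simple_graph_edge[OF H1_simple] .

lemma E2_edge: "{a, b} \<in> E2 \<Longrightarrow> a \<in> V2 \<and> b \<in> V2 \<and> a \<noteq> b"
  using simple_graph_edge[OF H2_simple] .

lemma N_sub: "N \<subseteq> V2 - {v}"
  unfolding N_def nbrs_def using E2_edge by auto

lemma finite_N: "finite N"
  using finite_subset[OF N_sub] finite_V2 by blast

lemma card_N_pos: "0 < card N"
proof -
  obtain y where "{v, y} \<in> E2"
    using connected_graph_ex_neighbour[OF H2_simple H2_connected H2_card v_in_V2] by blast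
  then have "y \<in> N" unfolding N_def nbrs_def by simp
  then show ?thesis using finite_N card_gt_0_iff by blast
qed

lemma GE_cases:
  assumes "{a, b} \<in> GE"
  obtains "{a, b} \<in> E1" | "{a, b} \<in> E2" | "{a, b} = {w, v}" | "{a, b} = {v, u 1}"
    | i where "1 \<le> i" "i < l" "{a, b} = {u i, u (Suc i)}"
  using assms unfolding GE_def by blast

lemma E1_sub_GE: "E1 \<subseteq> GE" and E2_sub_GE: "E2 \<subseteq> GE"
  and wv_in_GE: "{w, v} \<in> GE" and vu_in_GE: "{v, u 1} \<in> GE"
  and uu_in_GE: "1 \<le> i \<Longrightarrow> i < l \<Longrightarrow> {u i, u (Suc i)} \<in> GE"
  unfolding GE_def by blast+

lemma GE'_if_not_at_v: "e \<in> GE \<Longrightarrow> v \<notin> e \<Longrightarrow> e \<in> GE'"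
  unfolding GE'_def by auto

lemma E1_sub_GE': "E1 \<subseteq> GE'"
proof
  fix e assume "e \<in> E1"
  moreover then obtain a b where "e = {a, b}" using H1_simple unfolding simple_graph_def by blast
  ultimately show "e \<in> GE'" using GE'_if_not_at_v E1_sub_GE E1_edge w_v_distinct by blast
qed

lemma wv_in_GE': "{w, v} \<in> GE'"
  unfolding GE'_def using wv_in_GE N_sub w_v_distinct by (auto simp: doubleton_eq_iff)

lemma vu_in_GE': "{v, u 1} \<in> GE'"
  unfolding GE'_def using vu_in_GE N_sub u_mem[of 1] l_pos by (auto simp: doubleton_eq_iff)

lemma uu_in_GE': "1 \<le> i \<Longrightarrow> i < l \<Longrightarrow> {u i, u (Suc i)} \<in> GE'"
  using GE'_if_not_at_v[OF uu_in_GE] u_mem[of i] u_mem[of "Suc i"] v_in_V2 by auto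

lemma wN_in_GE': "x \<in> N \<Longrightarrow> {w, x} \<in> GE'"
  unfolding GE'_def by auto

lemma GE_sub: "e \<in> GE \<Longrightarrow> e \<subseteq> GV"
  unfolding GE_def GV_def using H1_simple H2_simple w_in_V1 v_in_V2 l_pos
  unfolding simple_graph_def by fastforce

lemma GE'_sub: "e \<in> GE' \<Longrightarrow> e \<subseteq> GV"
  unfolding GE'_def using GE_sub N_sub w_in_GV V2_sub_GV by auto

lemma reach_within_path:
  assumes "{v, u 1} \<in> F" "\<And>i. 1 \<le> i \<Longrightarrow> i < l \<Longrightarrow> {u i, u (Suc i)} \<in> F"
  shows "1 \<le> i \<Longrightarrow> i \<le> l \<Longrightarrow> reach_within GV F v (u i) i"
proof (induction i)
  case (Suc i)
  show ?case
  proof (cases "i = 0")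
    case True
    then show ?thesis using reach_within_edge[OF assms(1)] v_in_GV u_mem[of 1] l_pos by auto
  next
    case False
    then have "reach_within GV F (u i) (u (Suc i)) 1"
      using reach_within_edge[OF assms(2)] u_mem[of i] u_mem[of "Suc i"] Suc.prems by auto
    then show ?thesis using reach_within_trans Suc False by fastforce
  qed
qed simp

lemma reach_within_path_G: "1 \<le> i \<Longrightarrow> i \<le> l \<Longrightarrow> reach_within GV GE v (u i) i"
  using reach_within_path[OF vu_in_GE uu_in_GE] by blast

lemma reach_within_path_G': "1 \<le> i \<Longrightarrow> i \<le> l \<Longrightarrow> reach_within GV GE' v (u i) i"
  using reach_within_path[OF vu_in_GE' uu_in_GE'] by blast

lemma reach_within_H1_G: "reach_within V1 E1 a b n \<Longrightarrow> reach_within GV GE a b n"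
  by (rule reach_within_subgraph[OF _ V1_sub_GV E1_sub_GE])

lemma reach_within_H1_G': "reach_within V1 E1 a b n \<Longrightarrow> reach_within GV GE' a b n"
  by (rule reach_within_subgraph[OF _ V1_sub_GV E1_sub_GE'])

lemma reach_within_H2_G: "reach_within V2 E2 a b n \<Longrightarrow> reach_within GV GE a b n"
  by (rule reach_within_subgraph[OF _ V2_sub_GV E2_sub_GE])

lemma reach_within_H2_G':
  assumes "reach_within V2 E2 a b n"
  shows "reach_within GV GE' (if a = v then w else a) (if b = v then w else b) n"
proof (rule reach_within_map[OF assms])
  fix a b assume ab: "{a, b} \<in> E2" "a \<in> V2" "b \<in> V2"
  then have "a \<in> N" if "b = v" using that unfolding N_def nbrs_def by (simp add: insert_commute)
  moreover have "b \<in> N" if "a = v" using ab that unfolding N_def nbrs_def by simp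
  ultimately show "{if a = v then w else a, if b = v then w else b} \<in> GE'"
    using wN_in_GE' GE'_if_not_at_v E2_sub_GE ab E2_edge[OF ab(1)]
    by (auto simp: insert_commute)
qed (use V2_sub_GV w_in_GV in auto)

lemma reach_within_dist_H1: "a \<in> V1 \<Longrightarrow> b \<in> V1 \<Longrightarrow> reach_within V1 E1 a b (dist V1 E1 a b)"
  by (rule reach_within_dist[OF reachable_if_connected[OF H1_connected]])

lemma reach_within_dist_H2: "a \<in> V2 \<Longrightarrow> b \<in> V2 \<Longrightarrow> reach_within V2 E2 a b (dist V2 E2 a b)"
  by (rule reach_within_dist[OF reachable_if_connected[OF H2_connected]])

lemma reachable_G_w:
  assumes "x \<in> GV"
  shows "reachable GV GE x w"
proof -
  have vw: "reach_within GV GE v w 1"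
    using reach_within_sym[OF reach_within_edge[OF wv_in_GE w_in_GV v_in_GV]] .
  from assms show ?thesis
  proof (cases rule: GV_cases)
    case 1
    then show ?thesis by (rule reachable_if_reach_within[OF reach_within_H1_G[OF reach_within_dist_H1[OF _ w_in_V1]]])
  next
    case 2
    then show ?thesis
      by (rule reachable_if_reach_within[OF reach_within_trans[OF reach_within_H2_G[OF reach_within_dist_H2[OF _ v_in_V2]] vw]])
  next
    case (3 i)
    then show ?thesis
      using reachable_if_reach_within[OF reach_within_trans[OF reach_within_sym[OF reach_within_path_G] vw]]
      by simp
  qed
qed

lemma G_connected: "connected_graph GV GE"
  using reachable_trans[OF reachable_G_w reachable_sym[OF reachable_G_w]]
  by (intro connected_graph_if_reachable[OF GV_nonempty]) blast

lemma dist_G_sym: "x \<in> GV \<Longrightarrow> z \<in> GV \<Longrightarrow> dist GV GE x z = dist GV GE z x"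
  by (rule dist_sym[OF reachable_if_connected[OF G_connected]])

subsection \<open>Lower bounds for eccentricities in \<open>G\<close>\<close>

lemma D1_w: "D1 w = 0" and D2_v: "D2 v = 0"
  unfolding D1_def D2_def using w_in_V1 v_in_V2 by (simp_all add: dist_self)

lemma D1_le_k: "z \<in> V1 \<Longrightarrow> D1 z \<le> k"
  unfolding D1_def k_def using dist_le_ecc[OF finite_V1] .

lemma D2_le_m: "z \<in> V2 \<Longrightarrow> D2 z \<le> m"
  unfolding D2_def m_def using dist_le_ecc[OF finite_V2] .

lemma far_in_H1:
  obtains z where "z \<in> V1" "D1 z = k"
  using ecc_attained[OF finite_V1] w_in_V1 unfolding D1_def k_def by blast

lemma far_in_H2:
  obtains z where "z \<in> V2" "D2 z = m"
  using ecc_attained[OF finite_V2] v_in_V2 unfolding D2_def m_def by blast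

lemma D1_edge_le: "{a, b} \<in> E1 \<Longrightarrow> D1 b \<le> D1 a + 1"
  unfolding D1_def using E1_edge
  by (intro dist_edge_le reachable_if_connected[OF H1_connected w_in_V1]) auto

lemma D2_edge_le: "{a, b} \<in> E2 \<Longrightarrow> D2 b \<le> D2 a + 1"
  unfolding D2_def using E2_edge
  by (intro dist_edge_le reachable_if_connected[OF H2_connected v_in_V2]) auto

lemma lipschitz_on_GE:
  fixes \<phi> :: "'a \<Rightarrow> int"
  assumes "\<And>a b. {a, b} \<in> E1 \<Longrightarrow> \<phi> b \<le> \<phi> a + 1"
    and "\<And>a b. {a, b} \<in> E2 \<Longrightarrow> \<phi> b \<le> \<phi> a + 1"
    and "\<bar>\<phi> w - \<phi> v\<bar> \<le> 1" "\<bar>\<phi> v - \<phi> (u 1)\<bar> \<le> 1"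
    and "\<And>i. 1 \<le> i \<Longrightarrow> i < l \<Longrightarrow> \<bar>\<phi> (u i) - \<phi> (u (Suc i))\<bar> \<le> 1"
    and "{a, b} \<in> GE"
  shows "\<phi> b \<le> \<phi> a + 1"
  using assms(6)
proof (cases rule: GE_cases)
  case (5 i)
  then show ?thesis using assms(5)[OF 5(1,2)] by (auto simp: doubleton_eq_iff)
qed (use assms(1-4) in \<open>auto simp: doubleton_eq_iff\<close>)

definition "path_index t = inv_into {1..l} u t"

lemma path_index_u: "1 \<le> i \<Longrightarrow> i \<le> l \<Longrightarrow> path_index (u i) = i"
  unfolding path_index_def using u_inj by (auto intro: inv_into_f_f)

text \<open>\<open>pot_w\<close> grows by one per step away from \<open>H1\<close> across the edge \<open>wv\<close>, and
  \<open>pot_v\<close> by one per step away from the pendant path across the edge \<open>vu\<^sub>1\<close>.\<close>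

definition "pot_w t =
  (if t \<in> V1 then - int (D1 t) else if t \<in> V2 then 1 + int (D2 t) else 1 + int (path_index t))"

definition "pot_v t =
  (if t \<in> V2 then int (D2 t) else if t \<in> V1 then 1 + int (D1 t) else - int (path_index t))"

lemma pot_w_le_dist:
  assumes "x \<in> GV" "z \<in> GV"
  shows "pot_w z - pot_w x \<le> int (dist GV GE x z)"
proof (rule dist_ge_potential[OF reachable_if_connected[OF G_connected assms]])
  fix a b assume "{a, b} \<in> GE"
  then show "pot_w b \<le> pot_w a + 1"
  proof (rule lipschitz_on_GE[rotated 5])
    fix a b assume "{a, b} \<in> E1"
    then show "pot_w b \<le> pot_w a + 1"
      using D1_edge_le[of b a] E1_edge[of a b] unfolding pot_w_def by (simp add: insert_commute)
  next
    fix a b assume "{a, b} \<in> E2"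
    then show "pot_w b \<le> pot_w a + 1"
      using D2_edge_le[of a b] E2_edge[of a b] disjoint unfolding pot_w_def by auto
  next
    fix i assume "1 \<le> i" "i < l"
    then show "\<bar>pot_w (u i) - pot_w (u (Suc i))\<bar> \<le> 1"
      using u_mem[of i] u_mem[of "Suc i"] path_index_u[of i] path_index_u[of "Suc i"]
      unfolding pot_w_def by simp
  qed (use w_in_V1 v_in_V2 w_v_distinct D1_w D2_v u_mem[of 1] l_pos path_index_u[of 1]
      in \<open>simp_all add: pot_w_def\<close>)
qed

lemma pot_v_le_dist:
  assumes "x \<in> GV" "z \<in> GV"
  shows "pot_v z - pot_v x \<le> int (dist GV GE x z)"
proof (rule dist_ge_potential[OF reachable_if_connected[OF G_connected assms]])
  fix a b assume "{a, b} \<in> GE"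
  then show "pot_v b \<le> pot_v a + 1"
  proof (rule lipschitz_on_GE[rotated 5])
    fix a b assume "{a, b} \<in> E1"
    then show "pot_v b \<le> pot_v a + 1"
      using D1_edge_le[of a b] E1_edge[of a b] disjoint unfolding pot_v_def by auto
  next
    fix a b assume "{a, b} \<in> E2"
    then show "pot_v b \<le> pot_v a + 1"
      using D2_edge_le[of a b] E2_edge[of a b] unfolding pot_v_def by simp
  next
    fix i assume "1 \<le> i" "i < l"
    then show "\<bar>pot_v (u i) - pot_v (u (Suc i))\<bar> \<le> 1"
      using u_mem[of i] u_mem[of "Suc i"] path_index_u[of i] path_index_u[of "Suc i"]
      unfolding pot_v_def by simp
  qed (use w_in_V1 v_in_V2 w_v_distinct D1_w D2_v u_mem[of 1] l_pos path_index_u[of 1]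
      in \<open>simp_all add: pot_v_def\<close>)
qed

lemma GE_edge_at_V1:
  assumes "{a, b} \<in> GE" "a \<in> V1"
  shows "b \<in> V1 \<and> {a, b} \<in> E1 \<or> a = w \<and> b = v"
  using assms(1)
proof (cases rule: GE_cases)
  case 1
  then show ?thesis using E1_edge by blast
next
  case 2
  then show ?thesis using E2_edge assms(2) disjoint by blast
next
  case 3
  then show ?thesis using assms(2) w_v_distinct by (auto simp: doubleton_eq_iff)
next
  case 4
  then show ?thesis using assms(2) w_v_distinct u_mem[of 1] l_pos by (auto simp: doubleton_eq_iff)
next
  case (5 i)
  then show ?thesis using assms(2) u_mem[of i] u_mem[of "Suc i"] by (auto simp: doubleton_eq_iff)
qed

lemma GE_edge_at_V2:
  assumes "{a, b} \<in> GE" "a \<in> V2"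
  shows "b \<in> V2 \<and> {a, b} \<in> E2 \<or> a = v \<and> (b = w \<or> b = u 1)"
  using assms(1)
proof (cases rule: GE_cases)
  case 1
  then show ?thesis using E1_edge assms(2) disjoint by blast
next
  case 2
  then show ?thesis using E2_edge by blast
next
  case 3
  then show ?thesis using assms(2) w_v_distinct by (auto simp: doubleton_eq_iff)
next
  case 4
  then show ?thesis using assms(2) u_mem[of 1] l_pos by (auto simp: doubleton_eq_iff)
next
  case (5 i)
  then show ?thesis using assms(2) u_mem[of i] u_mem[of "Suc i"] by (auto simp: doubleton_eq_iff)
qed

lemma ecc_H1_le_ecc_G: "x \<in> V1 \<Longrightarrow> ecc V1 E1 x \<le> ecc GV GE x"
  using GE_edge_at_V1 w_v_distinct
  by (intro ecc_attached_subgraph_le[OF finite_GV G_connected V1_sub_GV H1_connected _ w_in_V1])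
     blast+

lemma ecc_H2_le_ecc_G: "x \<in> V2 \<Longrightarrow> ecc V2 E2 x \<le> ecc GV GE x"
  using GE_edge_at_V2 w_v_distinct u_mem[of 1] l_pos
  by (intro ecc_attached_subgraph_le[OF finite_GV G_connected V2_sub_GV H2_connected _ v_in_V2])
     blast+

lemma ecc_G_ge_V1:
  assumes "x \<in> V1"
  shows "D1 x + 1 + max m l \<le> ecc GV GE x"
proof -
  obtain z where z: "z \<in> V2" "D2 z = m" by (rule far_in_H2)
  have "pot_w z - pot_w x \<le> int (dist GV GE x z)"
    using pot_w_le_dist assms z(1) V1_sub_GV V2_sub_GV by blast
  moreover have "z \<notin> V1" using z(1) disjoint by blast
  ultimately have "D1 x + 1 + m \<le> dist GV GE x z"
    using assms z unfolding pot_w_def by auto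
  moreover have "pot_w (u l) - pot_w x \<le> int (dist GV GE x (u l))"
    using pot_w_le_dist assms u_mem[of l] l_pos V1_sub_GV by blast
  then have "D1 x + 1 + l \<le> dist GV GE x (u l)"
    using assms u_mem[of l] path_index_u[of l] l_pos unfolding pot_w_def by auto
  ultimately show ?thesis
    using dist_le_ecc[OF finite_GV subsetD[OF V2_sub_GV z(1)], of GE x]
      dist_le_ecc[OF finite_GV u_mem(3)[of l], of GE x] l_pos by auto
qed

lemma ecc_G_ge_V2:
  assumes "x \<in> V2"
  shows "D2 x + 1 + k \<le> ecc GV GE x"
proof -
  obtain z where z: "z \<in> V1" "D1 z = k" by (rule far_in_H1)
  have "pot_w x - pot_w z \<le> int (dist GV GE z x)"
    using pot_w_le_dist assms z(1) V1_sub_GV V2_sub_GV by blast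
  moreover have "x \<notin> V1" using assms disjoint by blast
  moreover have "dist GV GE z x = dist GV GE x z"
    using dist_G_sym assms z(1) V1_sub_GV V2_sub_GV by blast
  ultimately have "D2 x + 1 + k \<le> dist GV GE x z"
    using assms z unfolding pot_w_def by auto
  also have "\<dots> \<le> ecc GV GE x" using dist_le_ecc[OF finite_GV] z(1) V1_sub_GV by blast
  finally show ?thesis .
qed

lemma ecc_G_ge_path:
  assumes "1 \<le> i" "i \<le> l"
  shows "i + max (k + 1) m \<le> ecc GV GE (u i)"
proof -
  obtain y where y: "y \<in> V1" "D1 y = k" by (rule far_in_H1)
  obtain z where z: "z \<in> V2" "D2 z = m" by (rule far_in_H2)
  have "pot_w (u i) - pot_w y \<le> int (dist GV GE y (u i))"
    using pot_w_le_dist y(1) u_mem[OF assms] V1_sub_GV by blast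
  then have "i + k + 1 \<le> dist GV GE (u i) y"
    using y u_mem[OF assms] path_index_u[OF assms] dist_G_sym V1_sub_GV
    unfolding pot_w_def by auto
  moreover have "pot_v z - pot_v (u i) \<le> int (dist GV GE (u i) z)"
    using pot_v_le_dist z(1) u_mem[OF assms] V2_sub_GV by blast
  then have "i + m \<le> dist GV GE (u i) z"
    using z u_mem[OF assms] path_index_u[OF assms] unfolding pot_v_def by auto
  ultimately show ?thesis
    using dist_le_ecc[OF finite_GV subsetD[OF V1_sub_GV y(1)], of GE "u i"]
      dist_le_ecc[OF finite_GV subsetD[OF V2_sub_GV z(1)], of GE "u i"] by auto
qed

subsection \<open>Upper bounds for eccentricities in \<open>G'\<close>\<close>

lemma reach_within_G'_w_V1: "x \<in> V1 \<Longrightarrow> reach_within GV GE' w x (D1 x)"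
  unfolding D1_def by (rule reach_within_H1_G'[OF reach_within_dist_H1[OF w_in_V1]])

lemma reach_within_G'_w_V2: "x \<in> V2 \<Longrightarrow> x \<noteq> v \<Longrightarrow> reach_within GV GE' w x (D2 x)"
  unfolding D2_def using reach_within_H2_G'[OF reach_within_dist_H2[OF v_in_V2]] by force

lemma reach_within_G'_w_v: "reach_within GV GE' w v 1"
  using reach_within_edge[OF wv_in_GE' w_in_GV v_in_GV] .

lemma reach_within_G'_w_path: "1 \<le> i \<Longrightarrow> i \<le> l \<Longrightarrow> reach_within GV GE' w (u i) (i + 1)"
  using reach_within_trans[OF reach_within_G'_w_v reach_within_path_G'] by simp

lemma reach_within_G'_w_off_H1:
  assumes "z \<in> GV" "z \<notin> V1"
  shows "reach_within GV GE' w z (max m (l + 1))"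
  using assms(1)
proof (cases rule: GV_cases)
  case 2
  show ?thesis
  proof (cases "z = v")
    case True
    then show ?thesis using reach_within_mono[OF reach_within_G'_w_v] by simp
  next
    case False
    then show ?thesis using reach_within_mono[OF reach_within_G'_w_V2[OF 2]] D2_le_m[OF 2] by simp
  qed
next
  case (3 i)
  then show ?thesis using reach_within_mono[OF reach_within_G'_w_path] by simp
qed (use assms(2) in simp)

lemma reach_within_G'_w_off_H2:
  assumes "z \<in> GV" "z \<in> V2 \<Longrightarrow> z = v"
  shows "reach_within GV GE' w z k"
  using assms(1)
proof (cases rule: GV_cases)
  case 1
  then show ?thesis using reach_within_mono[OF reach_within_G'_w_V1] D1_le_k by blast
next
  case 2
  then show ?thesis using reach_within_mono[OF reach_within_G'_w_v] assms(2) l_less_k by simp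
next
  case (3 i)
  then show ?thesis using reach_within_mono[OF reach_within_G'_w_path] l_less_k by simp
qed

lemma reach_within_G'_w:
  assumes "z \<in> GV"
  shows "reach_within GV GE' w z (max k m)"
proof (cases "z \<in> V1")
  case True
  then have "z \<notin> V2" using disjoint by blast
  then show ?thesis using reach_within_mono[OF reach_within_G'_w_off_H2[OF assms]] by simp
next
  case False
  then show ?thesis using reach_within_mono[OF reach_within_G'_w_off_H1[OF assms]] l_less_k by simp
qed

lemma ecc_H1_le: "y \<in> V1 \<Longrightarrow> ecc V1 E1 y \<le> D1 y + k"
  using reach_within_mono[OF reach_within_trans[OF reach_within_sym[OF reach_within_dist_H1[OF w_in_V1]]
        reach_within_dist_H1[OF w_in_V1]]] D1_le_k w_in_V1
  unfolding D1_def by (intro ecc_le_if_reach_within[OF finite_V1]) auto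

lemma ecc_G'_V1:
  assumes "x \<in> V1"
  shows "ecc GV GE' x \<le> max (ecc V1 E1 x) (D1 x + max m (l + 1))"
proof (rule ecc_le_if_reach_within[OF finite_GV GV_nonempty])
  fix z assume z: "z \<in> GV"
  show "reach_within GV GE' x z (max (ecc V1 E1 x) (D1 x + max m (l + 1)))"
  proof (cases "z \<in> V1")
    case True
    have "dist V1 E1 x z \<le> ecc V1 E1 x" by (rule dist_le_ecc[OF finite_V1 True])
    then show ?thesis
      using reach_within_mono[OF reach_within_H1_G'[OF reach_within_dist_H1[OF assms True]]] by simp
  next
    case False
    then show ?thesis
      using reach_within_mono[OF reach_within_trans[OF reach_within_sym[OF reach_within_G'_w_V1[OF assms]]
          reach_within_G'_w_off_H1[OF z False]]] by simp
  qed
qed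

lemma ecc_G'_V2:
  assumes "x \<in> V2" "x \<noteq> v"
  shows "ecc GV GE' x \<le> max (ecc V2 E2 x) (D2 x + k)"
proof (rule ecc_le_if_reach_within[OF finite_GV GV_nonempty])
  fix z assume z: "z \<in> GV"
  show "reach_within GV GE' x z (max (ecc V2 E2 x) (D2 x + k))"
  proof (cases "z \<in> V2 \<and> z \<noteq> v")
    case True
    then have "reach_within GV GE' x z (dist V2 E2 x z)"
      using reach_within_H2_G'[OF reach_within_dist_H2[OF assms(1), of z]] assms(2) by simp
    moreover have "dist V2 E2 x z \<le> ecc V2 E2 x" using dist_le_ecc[OF finite_V2] True by blast
    ultimately show ?thesis using reach_within_mono by fastforce
  next
    case False
    then show ?thesis
      using reach_within_mono[OF reach_within_trans[OF reach_within_sym[OF reach_within_G'_w_V2[OF assms]]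
          reach_within_G'_w_off_H2[OF z]]] by simp
  qed
qed

lemma ecc_G'_v: "ecc GV GE' v \<le> max k m + 1"
  using reach_within_trans[OF reach_within_sym[OF reach_within_G'_w_v] reach_within_G'_w]
  by (intro ecc_le_if_reach_within[OF finite_GV GV_nonempty]) simp

lemma ecc_G'_path:
  assumes "1 \<le> i" "i \<le> l"
  shows "ecc GV GE' (u i) \<le> i + 1 + max k m"
proof -
  have "reach_within GV GE' (u i) w (i + 1)"
    using reach_within_sym[OF reach_within_G'_w_path[OF assms]] .
  then show ?thesis
    using reach_within_trans[OF _ reach_within_G'_w]
    by (intro ecc_le_if_reach_within[OF finite_GV GV_nonempty])
qed

lemma ecc_G'_pos:
  assumes "x \<in> GV"
  shows "0 < ecc GV GE' x"
proof (cases "x = w")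
  case True
  then show ?thesis
    using ecc_pos[OF finite_GV v_in_GV reachable_if_reach_within[OF reach_within_G'_w_v]]
      w_v_distinct by simp
next
  case False
  then show ?thesis
    using ecc_pos[OF finite_GV w_in_GV
        reachable_if_reach_within[OF reach_within_sym[OF reach_within_G'_w[OF assms]]]] by simp
qed

lemma ecc_G'_le_ecc_G:
  assumes "x \<in> V1 \<union> V2" "x \<noteq> v"
  shows "ecc GV GE' x \<le> ecc GV GE x"
proof (cases "x \<in> V1")
  case True
  have "max (ecc V1 E1 x) (D1 x + max m (l + 1)) \<le> ecc GV GE x"
    using ecc_H1_le_ecc_G[OF True] ecc_G_ge_V1[OF True] by simp
  then show ?thesis using ecc_G'_V1[OF True] by linarith
next
  case False
  then have "x \<in> V2" using assms(1) by blast
  then have "max (ecc V2 E2 x) (D2 x + k) \<le> ecc GV GE x"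
    using ecc_H2_le_ecc_G ecc_G_ge_V2 by fastforce
  then show ?thesis using ecc_G'_V2[OF \<open>x \<in> V2\<close> assms(2)] by linarith
qed

lemma finite_nbrs_GE: "finite (nbrs GE x)"
  by (rule finite_subset[OF _ finite_GV]) (use GE_sub in \<open>auto simp: nbrs_def\<close>)

lemma finite_nbrs_GE': "finite (nbrs GE' x)"
  by (rule finite_subset[OF _ finite_GV]) (use GE'_sub in \<open>auto simp: nbrs_def\<close>)

lemma nbrs_GE_sub_nbrs_GE':
  assumes "x \<notin> N" "x \<noteq> v"
  shows "nbrs GE x \<subseteq> nbrs GE' x"
proof
  fix y assume "y \<in> nbrs GE x"
  moreover have "{x, y} \<notin> {{v, x'} | x'. x' \<in> N}" using assms by (auto simp: doubleton_eq_iff)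
  ultimately show "y \<in> nbrs GE' x" unfolding nbrs_def GE'_def by blast
qed

lemma degree_G_le_degree_G':
  assumes "x \<noteq> v"
  shows "degree GE x \<le> degree GE' x"
proof (cases "x \<in> N")
  case False
  then show ?thesis
    unfolding degree_def by (rule card_mono[OF finite_nbrs_GE' nbrs_GE_sub_nbrs_GE'[OF _ assms]])
next
  case True
  then have "x \<in> V2" using N_sub by blast
  then have "w \<notin> nbrs GE x"
    using GE_edge_at_V2[of x w] assms w_v_distinct unfolding nbrs_def by auto
  then have "inj_on (\<lambda>y. if y = v then w else y) (nbrs GE x)"
    by (auto intro: inj_onI split: if_splits)
  moreover have "(\<lambda>y. if y = v then w else y) ` nbrs GE x \<subseteq> nbrs GE' x"
  proof
    fix z assume "z \<in> (\<lambda>y. if y = v then w else y) ` nbrs GE x"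
    then obtain y where y: "{x, y} \<in> GE" "z = (if y = v then w else y)"
      unfolding nbrs_def by auto
    have "{x, w} \<in> GE'" using wN_in_GE'[OF True] by (simp add: insert_commute)
    then show "z \<in> nbrs GE' x"
      using GE'_if_not_at_v[OF y(1)] y(2) assms unfolding nbrs_def by auto
  qed
  ultimately show ?thesis unfolding degree_def using card_inj_on_le[OF _ _ finite_nbrs_GE'] by blast
qed

lemma degree_G'_w: "degree GE w + card N \<le> degree GE' w"
proof -
  have "y \<notin> N" if "y \<in> nbrs GE w" for y
  proof
    assume "y \<in> N"
    then have "y \<in> V2" "y \<noteq> v" using N_sub by auto
    moreover have "{y, w} \<in> GE" using that unfolding nbrs_def by (simp add: insert_commute)
    ultimately show False using GE_edge_at_V2[of y w] w_v_distinct by blast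
  qed
  then have "nbrs GE w \<inter> N = {}" by blast
  then have "card (nbrs GE w) + card N = card (nbrs GE w \<union> N)"
    using card_Un_disjoint[OF finite_nbrs_GE finite_N] by simp
  also have "\<dots> \<le> card (nbrs GE' w)"
    using nbrs_GE_sub_nbrs_GE'[of w] N_sub w_v_distinct wN_in_GE'
    by (intro card_mono[OF finite_nbrs_GE']) (auto simp: nbrs_def)
  finally show ?thesis unfolding degree_def .
qed

lemma degree_G_v: "degree GE v \<le> card N + 2"
proof -
  have "nbrs GE v \<subseteq> N \<union> {w, u 1}"
    using GE_edge_at_V2[of v] v_in_V2 unfolding nbrs_def N_def by auto
  then have "degree GE v \<le> card (N \<union> {w, u 1})"
    unfolding degree_def using finite_N by (intro card_mono) auto
  also have "\<dots> \<le> card N + card {w, u 1}" by (rule card_Un_le)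
  also have "card {w, u 1} \<le> 2" by (simp add: card_insert_le_m1)
  finally show ?thesis by simp
qed

lemma degree_G'_v: "2 \<le> degree GE' v"
proof (rule two_le_degree[OF finite_nbrs_GE' _ vu_in_GE'])
  show "{v, w} \<in> GE'" using wv_in_GE' by (simp add: insert_commute)
  show "w \<noteq> u 1" using u_mem[of 1] l_pos w_in_V1 by auto
qed

lemma degree_G_path:
  assumes "1 \<le> i" "i \<le> l"
  shows "degree GE (u i) \<le> 2"
proof -
  have "nbrs GE (u i) \<subseteq> {if i = 1 then v else u (i - 1), u (Suc i)}"
  proof
    fix y assume "y \<in> nbrs GE (u i)"
    then have "{u i, y} \<in> GE" unfolding nbrs_def by simp
    then show "y \<in> {if i = 1 then v else u (i - 1), u (Suc i)}"
    proof (cases rule: GE_cases)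
      case 4
      then show ?thesis
        using u_mem[OF assms] u_eq_iff[of i 1] assms v_in_V2 by (auto simp: doubleton_eq_iff)
    next
      case (5 j)
      then have "u i = u j \<and> y = u (Suc j) \<or> u i = u (Suc j) \<and> y = u j"
        by (auto simp: doubleton_eq_iff)
      then show ?thesis using u_eq_iff[of i j] u_eq_iff[of i "Suc j"] assms 5(1,2) by auto
    qed (use E1_edge[of "u i" y] E2_edge[of "u i" y] u_mem[OF assms] w_in_V1 v_in_V2
        in \<open>auto simp: doubleton_eq_iff\<close>)
  qed
  then have "degree GE (u i) \<le> card {if i = 1 then v else u (i - 1), u (Suc i)}"
    unfolding degree_def by (intro card_mono) simp_all
  also have "\<dots> \<le> 2" by (simp add: card_insert_le_m1)
  finally show ?thesis .
qed

lemma degree_G_w: "2 \<le> degree GE w"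
proof -
  obtain y where y: "{w, y} \<in> E1" "y \<in> V1"
    using connected_graph_ex_neighbour[OF H1_simple H1_connected H1_card w_in_V1] by blast
  have "y \<noteq> v" using y(2) w_v_distinct by blast
  then show ?thesis by (rule two_le_degree[OF finite_nbrs_GE subsetD[OF E1_sub_GE y(1)] wv_in_GE])
qed

lemma degree_G_V1_pos:
  assumes "x \<in> V1"
  shows "0 < degree GE x"
proof -
  obtain y where "{x, y} \<in> E1"
    using connected_graph_ex_neighbour[OF H1_simple H1_connected H1_card assms] by blast
  then show ?thesis by (rule degree_pos[OF finite_nbrs_GE subsetD[OF E1_sub_GE]])
qed

subsection \<open>Comparing the indices\<close>

definition "gain x =
  real (degree GE' x) / real (ecc GV GE' x) - real (degree GE x) / real (ecc GV GE x)"

lemma xi_ee_diff: "xi_ee GV GE' - xi_ee GV GE = (\<Sum>x\<in>GV. gain x)"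
  unfolding xi_ee_def gain_def by (simp add: sum_subtractf)

lemma gain_ge:
  assumes "x \<in> GV" "real (ecc GV GE' x) \<le> p'" "0 < p" "p \<le> real (ecc GV GE x)"
    and "0 \<le> q'" "q' \<le> real (degree GE' x)" "real (degree GE x) \<le> q"
  shows "q' / p' - q / p \<le> gain x"
  unfolding gain_def using ecc_G'_pos[OF assms(1)] assms(2-7) by (intro frac_diff_le) auto

lemma gain_nonneg_if_ecc_le:
  assumes "x \<in> GV" "x \<noteq> v" "ecc GV GE' x \<le> ecc GV GE x"
  shows "0 \<le> gain x"
  using gain_ge[OF assms(1), of "ecc GV GE' x" "ecc GV GE' x" "degree GE x" "degree GE x"]
    ecc_G'_pos[OF assms(1)] degree_G_le_degree_G'[OF assms(2)] assms(3) by simp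

lemma gain_nonneg: "x \<in> V1 \<union> V2 \<Longrightarrow> x \<noteq> v \<Longrightarrow> 0 \<le> gain x"
  using gain_nonneg_if_ecc_le ecc_G'_le_ecc_G V1_sub_GV V2_sub_GV by blast

lemma gain_path_nonneg:
  assumes "m \<le> k" "1 \<le> i" "i \<le> l"
  shows "0 \<le> gain (u i)"
proof (rule gain_nonneg_if_ecc_le[OF u_mem(3)[OF assms(2,3)]])
  show "u i \<noteq> v" using u_mem[OF assms(2,3)] v_in_V2 by blast
  show "ecc GV GE' (u i) \<le> ecc GV GE (u i)"
    using ecc_G'_path[OF assms(2,3)] ecc_G_ge_path[OF assms(2,3)] assms(1) by simp
qed

lemma gain_w_v_pos:
  assumes "m \<le> k"
  shows "0 < gain w + gain v"
proof -
  define d where "d = real (degree GE w)"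
  define n where "n = real (card N)"
  have k_pos: "0 < real k" using l_less_k by simp
  have "(d + n) / real k - d / real k \<le> gain w"
  proof (rule gain_ge[OF w_in_GV])
    show "real (ecc GV GE' w) \<le> real k"
      using ecc_G'_V1[OF w_in_V1] assms l_less_k D1_w k_def by simp
    show "real k \<le> real (ecc GV GE w)" using ecc_H1_le_ecc_G[OF w_in_V1] k_def by simp
    show "d + n \<le> real (degree GE' w)" using degree_G'_w unfolding d_def n_def by linarith
  qed (use k_pos in \<open>auto simp: d_def n_def\<close>)
  moreover have "2 / (real k + 1) - (n + 2) / (real k + 1) \<le> gain v"
  proof (rule gain_ge[OF v_in_GV])
    show "real (ecc GV GE' v) \<le> real k + 1" using ecc_G'_v assms by simp
    show "real k + 1 \<le> real (ecc GV GE v)" using ecc_G_ge_V2[OF v_in_V2] D2_v by simp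
    show "real (degree GE v) \<le> n + 2" using degree_G_v unfolding n_def by linarith
  qed (use degree_G'_v in auto)
  moreover have "0 < n / real k - n / (real k + 1)"
    using k_pos card_N_pos unfolding n_def by (simp add: frac_less2)
  ultimately show ?thesis by (simp add: diff_divide_distrib add_divide_distrib)
qed

lemma xi_ee_less_if_m_le_k:
  assumes "m \<le> k"
  shows "xi_ee GV GE < xi_ee GV GE'"
proof -
  have "0 < (\<Sum>x\<in>{w, v}. gain x)" using gain_w_v_pos[OF assms] w_v_distinct by simp
  also have "\<dots> \<le> (\<Sum>x\<in>GV. gain x)"
  proof (rule sum_mono2[OF finite_GV])
    show "{w, v} \<subseteq> GV" using w_in_GV v_in_GV by blast
    fix x assume "x \<in> GV - {w, v}"
    then have "x \<in> GV" "x \<noteq> v" by auto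
    then show "0 \<le> gain x"
      by (cases rule: GV_cases) (auto intro: gain_nonneg gain_path_nonneg[OF assms])
  qed
  finally show ?thesis using xi_ee_diff by simp
qed

lemma gain_V1_ge:
  assumes "k < m" "y \<in> V1"
  shows "real (degree GE y) / real (D1 y + m) - real (degree GE y) / (real (D1 y + m) + 1)
    \<le> gain y"
proof (rule gain_ge[OF subsetD[OF V1_sub_GV assms(2)]])
  show "real (ecc GV GE' y) \<le> real (D1 y + m)"
    using ecc_G'_V1[OF assms(2)] ecc_H1_le[OF assms(2)] assms(1) l_less_k by simp
  show "real (D1 y + m) + 1 \<le> real (ecc GV GE y)"
    using ecc_G_ge_V1[OF assms(2)] assms(1) l_less_k by simp
  have "y \<noteq> v" using assms(2) w_v_distinct by blast
  then show "real (degree GE y) \<le> real (degree GE' y)" using degree_G_le_degree_G' by simp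
qed (use assms(1) in auto)

lemma gain_path_ge:
  assumes "k < m" "1 \<le> j" "j \<le> l"
  shows "real (degree GE (u j)) / (real (j + m) + 1) - real (degree GE (u j)) / real (j + m)
    \<le> gain (u j)"
proof (rule gain_ge[OF u_mem(3)[OF assms(2,3)]])
  show "real (ecc GV GE' (u j)) \<le> real (j + m) + 1"
    using ecc_G'_path[OF assms(2,3)] assms(1) by simp
  show "real (j + m) \<le> real (ecc GV GE (u j))"
    using ecc_G_ge_path[OF assms(2,3)] by simp
  have "u j \<noteq> v" using u_mem[OF assms(2,3)] v_in_V2 by blast
  then show "real (degree GE (u j)) \<le> real (degree GE' (u j))" using degree_G_le_degree_G' by simp
qed (use assms(1) in auto)

lemma gain_w_v_nonneg:
  assumes "k < m"
  shows "0 \<le> gain w + gain v"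
proof -
  define d where "d = real (degree GE w)"
  define n where "n = real (card N)"
  have m_pos: "0 < real m" using assms by simp
  have "(d + n) / real m - d / (real m + 1) \<le> gain w"
  proof (rule gain_ge[OF w_in_GV])
    show "real (ecc GV GE' w) \<le> real m"
      using ecc_G'_V1[OF w_in_V1] assms l_less_k D1_w k_def by simp
    show "real m + 1 \<le> real (ecc GV GE w)" using ecc_G_ge_V1[OF w_in_V1] D1_w by simp
    show "d + n \<le> real (degree GE' w)" using degree_G'_w unfolding d_def n_def by linarith
  qed (auto simp: d_def n_def)
  moreover have "2 / (real m + 1) - (n + 2) / real m \<le> gain v"
  proof (rule gain_ge[OF v_in_GV])
    show "real (ecc GV GE' v) \<le> real m + 1" using ecc_G'_v assms by simp
    show "real m \<le> real (ecc GV GE v)" using ecc_H2_le_ecc_G[OF v_in_V2] m_def by simp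
    show "real (degree GE v) \<le> n + 2" using degree_G_v unfolding n_def by linarith
  qed (use degree_G'_v m_pos in auto)
  moreover have "2 / real m - 2 / (real m + 1) \<le> d / real m - d / (real m + 1)"
    using frac_diff_succ_mono[OF _ m_pos] degree_G_w unfolding d_def by simp
  ultimately show ?thesis by (simp add: diff_divide_distrib add_divide_distrib)
qed

lemma gain_pair_nonneg:
  assumes "k < m" "1 \<le> j" "j \<le> l" "y \<in> V1" "D1 y = j" "2 \<le> degree GE y"
  shows "0 \<le> gain (u j) + gain y"
proof -
  define a where "a = real (j + m)"
  have pos: "0 < a" using assms(1) unfolding a_def by simp
  have "real (degree GE (u j)) / a - real (degree GE (u j)) / (a + 1) \<le> 2 / a - 2 / (a + 1)"
    using degree_G_path[OF assms(2,3)] by (intro frac_diff_succ_mono[OF _ pos]) simp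
  moreover have "2 / a - 2 / (a + 1) \<le> real (degree GE y) / a - real (degree GE y) / (a + 1)"
    using assms(6) by (intro frac_diff_succ_mono[OF _ pos]) simp
  ultimately show ?thesis
    using gain_path_ge[OF assms(1-3)] gain_V1_ge[OF assms(1,4)] unfolding assms(5) a_def
    by linarith
qed

lemma geodesic_from_w:
  obtains y where "\<And>j. j \<le> k \<Longrightarrow> y j \<in> V1 \<and> D1 (y j) = j"
    and "\<And>j. 1 \<le> j \<Longrightarrow> j < k \<Longrightarrow> 2 \<le> degree GE (y j)"
proof -
  obtain z where z: "z \<in> V1" "D1 z = k" by (rule far_in_H1)
  obtain ys where "length ys = Suc (dist V1 E1 w z)"
    and "\<And>j. j \<le> dist V1 E1 w z \<Longrightarrow> ys ! j \<in> V1 \<and> dist V1 E1 w (ys ! j) = j"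
    and "\<And>j. j < dist V1 E1 w z \<Longrightarrow> {ys ! j, ys ! Suc j} \<in> E1"
    using geodesic_exists[OF reachable_if_connected[OF H1_connected w_in_V1 z(1)]] by blast
  then have ys: "\<And>j. j \<le> k \<Longrightarrow> ys ! j \<in> V1 \<and> D1 (ys ! j) = j"
    "\<And>j. j < k \<Longrightarrow> {ys ! j, ys ! Suc j} \<in> E1"
    using z(2) unfolding D1_def by auto
  have "2 \<le> degree GE (ys ! j)" if j: "1 \<le> j" "j < k" for j
  proof (rule two_le_degree[OF finite_nbrs_GE])
    have "{ys ! (j - 1), ys ! Suc (j - 1)} \<in> E1" using ys(2)[of "j - 1"] j by simp
    then show "{ys ! j, ys ! (j - 1)} \<in> GE"
      using j(1) subsetD[OF E1_sub_GE] by (simp add: insert_commute)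
    show "{ys ! j, ys ! Suc j} \<in> GE" using subsetD[OF E1_sub_GE ys(2)[OF j(2)]] .
    have "D1 (ys ! (j - 1)) = j - 1" "D1 (ys ! Suc j) = Suc j" using ys(1) j by auto
    then show "ys ! (j - 1) \<noteq> ys ! Suc j" by auto
  qed
  with ys(1) show ?thesis by (rule that)
qed

lemma gain_pairs_nonneg:
  assumes "k < m"
    and y: "\<And>j. j \<le> k \<Longrightarrow> y j \<in> V1 \<and> D1 (y j) = j"
    and deg_y: "\<And>j. 1 \<le> j \<Longrightarrow> j < k \<Longrightarrow> 2 \<le> degree GE (y j)"
  shows "0 \<le> (\<Sum>x\<in>u ` {1..l} \<union> y ` {1..l}. gain x)"
proof -
  have y_l: "y j \<in> V1" "D1 (y j) = j" if "j \<in> {1..l}" for j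
  proof -
    have "j \<le> k" using that l_less_k by simp
    then show "y j \<in> V1" "D1 (y j) = j" using y by blast+
  qed
  have "y ` {1..l} \<subseteq> V1" using y_l(1) by blast
  then have "u ` {1..l} \<inter> y ` {1..l} = {}" using u_fresh by blast
  moreover have "inj_on y {1..l}"
    using y_l(2) by (metis inj_onI)
  ultimately have "(\<Sum>x\<in>u ` {1..l} \<union> y ` {1..l}. gain x)
      = (\<Sum>j=1..l. gain (u j)) + (\<Sum>j=1..l. gain (y j))"
    using u_inj by (simp add: sum.union_disjoint sum.reindex)
  also have "\<dots> = (\<Sum>j=1..l. gain (u j) + gain (y j))" by (rule sum.distrib[symmetric])
  also have "\<dots> \<ge> 0"
  proof (rule sum_nonneg)
    fix j assume j: "j \<in> {1..l}"
    then have "j < k" using l_less_k by simp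
    then show "0 \<le> gain (u j) + gain (y j)"
      using gain_pair_nonneg[OF assms(1) _ _ y_l[OF j] deg_y] j by auto
  qed
  finally show ?thesis .
qed

lemma xi_ee_less_if_k_less_m:
  assumes "k < m"
  shows "xi_ee GV GE < xi_ee GV GE'"
proof -
  obtain y where y: "\<And>j. j \<le> k \<Longrightarrow> y j \<in> V1 \<and> D1 (y j) = j"
    and deg_y: "\<And>j. 1 \<le> j \<Longrightarrow> j < k \<Longrightarrow> 2 \<le> degree GE (y j)"
    using geodesic_from_w by blast
  have y_l: "y j \<in> V1" "1 \<le> D1 (y j)" "D1 (y j) \<le> l" if "j \<in> {1..l}" for j
  proof -
    have "j \<le> k" using that l_less_k by simp
    then have "y j \<in> V1" "D1 (y j) = j" using y by blast+
    then show "y j \<in> V1" "1 \<le> D1 (y j)" "D1 (y j) \<le> l" using that by simp_all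
  qed
  have yk: "y k \<in> V1" "D1 (y k) = k" using y[of k] by auto
  define PY where "PY = u ` {1..l} \<union> y ` {1..l}"
  have PY_cases: "x \<notin> V1 \<and> x \<notin> V2 \<or> x \<in> V1 \<and> 1 \<le> D1 x \<and> D1 x \<le> l" if x: "x \<in> PY" for x
  proof -
    consider "x \<in> u ` {1..l}" | j where "j \<in> {1..l}" "x = y j"
      using x unfolding PY_def by blast
    then show ?thesis
    proof cases
      case 1
      then show ?thesis using u_fresh by blast
    next
      case 2
      then show ?thesis using y_l[OF 2(1)] by simp
    qed
  qed
  have "y k \<notin> PY" using PY_cases[of "y k"] yk l_less_k by auto
  moreover have "w \<notin> PY" using PY_cases[of w] w_in_V1 D1_w by auto
  moreover have "v \<notin> PY" using PY_cases[of v] v_in_V2 w_v_distinct by auto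
  moreover have "y k \<noteq> w" "y k \<noteq> v" using yk D1_w l_less_k w_v_distinct by auto
  moreover have "finite PY" unfolding PY_def by simp
  ultimately have "(\<Sum>x\<in>insert (y k) (insert w (insert v PY)). gain x)
      = gain (y k) + (gain w + gain v) + (\<Sum>x\<in>PY. gain x)"
    using w_v_distinct by simp
  also have "\<dots> > 0"
  proof -
    define d where "d = real (degree GE (y k))"
    have "0 < d / real (k + m) - d / (real (k + m) + 1)"
      using degree_G_V1_pos[OF yk(1)] assms unfolding d_def by (simp add: frac_less2)
    then have "0 < gain (y k)" using gain_V1_ge[OF assms yk(1)] unfolding yk(2) d_def by linarith
    then show ?thesis
      using gain_w_v_nonneg[OF assms] gain_pairs_nonneg[OF assms y deg_y] unfolding PY_def
      by linarith
  qed
  also have "(\<Sum>x\<in>insert (y k) (insert w (insert v PY)). gain x) \<le> (\<Sum>x\<in>GV. gain x)"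
  proof (rule sum_mono2[OF finite_GV])
    have "y ` {1..l} \<subseteq> V1" by (rule image_subsetI) (rule y_l(1))
    then have "PY \<subseteq> GV" unfolding PY_def GV_def by blast
    then show "insert (y k) (insert w (insert v PY)) \<subseteq> GV"
      using yk(1) V1_sub_GV w_in_GV v_in_GV by blast
    fix x assume x: "x \<in> GV - insert (y k) (insert w (insert v PY))"
    then have "x \<in> V1 \<union> V2" unfolding PY_def GV_def by blast
    moreover have "x \<noteq> v" using x by blast
    ultimately show "0 \<le> gain x" by (rule gain_nonneg)
  qed
  finally show ?thesis using xi_ee_diff by simp
qed

lemma xi_ee_less: "xi_ee GV GE < xi_ee GV GE'"
  using xi_ee_less_if_m_le_k xi_ee_less_if_k_less_m by (cases "m \<le> k") auto

end

theorem theorem3p1: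
  fixes V1 V2 :: "'a set" and E1 E2 :: "'a set set" and w v :: 'a
    and u :: "nat \<Rightarrow> 'a" and l k :: nat
  assumes "simple_graph V1 E1" "connected_graph V1 E1" "card V1 \<ge> 2"
    and "simple_graph V2 E2" "connected_graph V2 E2" "card V2 \<ge> 2"
    and "V1 \<inter> V2 = {}"
    and "w \<in> V1" "v \<in> V2"
    and "k = ecc V1 E1 w"
    and "l \<ge> 1" "k \<ge> l + 1"
    and "inj_on u {1..l}" "u ` {1..l} \<inter> (V1 \<union> V2) = {}"
  shows "let V = V1 \<union> V2 \<union> u ` {1..l};
             E = E1 \<union> E2 \<union> {{w, v}, {v, u 1}} \<union> {{u i, u (Suc i)} | i. 1 \<le> i \<and> i < l};
             E' = (E - {{v, x} | x. x \<in> nbrs E2 v}) \<union> {{w, x} | x. x \<in> nbrs E2 v}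
         in xi_ee V E < xi_ee V E'"
proof -
  interpret cut_edge_pendant_path V1 V2 E1 E2 w v u l k
    using assms by unfold_locales
  show ?thesis
    using xi_ee_less unfolding Let_def GV_def GE_def GE'_def N_def .
qed

end
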